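(* Let $G$ be a simple graph with a consistent link-coloring $c$ (in the sense of the context), and let $\alpha\neq\beta$ be two colors. Let $H$ be an $(\alpha,\beta)$ cycle, i.e. a cycle of $G$ all of whose links are colored $\alpha$ or $\beta$. If $H$ has an even number of edges, then $H$ contains an even number of variable edges; if $H$ has an odd number of edges, then $H$ contains an odd number of variable edges.
   Context: Let $G=(V,E)$ be a simple graph. Each edge $e_{i,j}=v_iv_j$ is regarded as consisting of two links (half-edges): $l_{i,j}$, incident to $v_i$, and $l_{j,i}$, incident to $v_j$. A coloring function is a map $c$ assigning to every link a color from a set $C$ of colors; write $c_{i,j}=c(l_{i,j})$, and the colored edge is the pair $(c_{i,j},c_{j,i})$. The colored edge is a constant if $c_{i,j}=c_{j,i}$ and a variable otherwise. The coloring is consistent if, at every vertex $v$, all links incident to $v$ receive distinct colors. For colors $\alpha\neq\beta$, an $(\alpha,\beta)$ cycle is a cycle in $G$ every link of which (both links of every edge of the cycle) has color in $\{\alpha,\beta\}$; its parity is the parity of its number of edges. *)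

theory Defs
  imports Main
begin

definition simple_graph :: "'v set \<Rightarrow> 'v set set \<Rightarrow> bool" where
  "simple_graph V E \<longleftrightarrow> (\<forall>e\<in>E. \<exists>u v. u \<noteq> v \<and> u \<in> V \<and> v \<in> V \<and> e = {u, v})"

text \<open>A link coloring is a function c :: 'v => 'v => 'c; c u v is the color of the
  link l_{u,v} (the half of edge uv incident to u). Only values on edges matter.\<close>

definition consistent_coloring :: "'v set set \<Rightarrow> ('v \<Rightarrow> 'v \<Rightarrow> 'c) \<Rightarrow> bool" where
  "consistent_coloring E c \<longleftrightarrow>
     (\<forall>v u w. {v, u} \<in> E \<and> {v, w} \<in> E \<and> u \<noteq> w \<longrightarrow> c v u \<noteq> c v w)"

definition cyc_next :: "'v list \<Rightarrow> nat \<Rightarrow> 'v" where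
  "cyc_next vs i = vs ! (Suc i mod length vs)"

definition is_cycle :: "'v set \<Rightarrow> 'v set set \<Rightarrow> 'v list \<Rightarrow> bool" where
  "is_cycle V E vs \<longleftrightarrow> length vs \<ge> 3 \<and> distinct vs \<and> set vs \<subseteq> V \<and>
     (\<forall>i < length vs. {vs ! i, cyc_next vs i} \<in> E)"

definition ab_cycle :: "'v set \<Rightarrow> 'v set set \<Rightarrow> ('v \<Rightarrow> 'v \<Rightarrow> 'c) \<Rightarrow> 'c \<Rightarrow> 'c \<Rightarrow> 'v list \<Rightarrow> bool" where
  "ab_cycle V E c \<alpha> \<beta> vs \<longleftrightarrow> is_cycle V E vs \<and>
     (\<forall>i < length vs. c (vs ! i) (cyc_next vs i) \<in> {\<alpha>, \<beta>} \<and> c (cyc_next vs i) (vs ! i) \<in> {\<alpha>, \<beta>})"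

definition num_variable_edges :: "('v \<Rightarrow> 'v \<Rightarrow> 'c) \<Rightarrow> 'v list \<Rightarrow> nat" where
  "num_variable_edges c vs = card {i. i < length vs \<and> c (vs ! i) (cyc_next vs i) \<noteq> c (cyc_next vs i) (vs ! i)}"

end

theory Submission
  imports Defs
begin

text \<open>Follow the colour of the link by which each vertex of an \<open>(\<alpha>, \<beta>)\<close> cycle leaves towards
  its successor. Consistency at a vertex forces its two cycle links to carry the two different
  colours, so an edge is variable exactly when the leaving colours at its two endpoints agree, and
  constant exactly when they change. Going once around the cycle, the leaving colour changes an
  even number of times; hence the number of variable edges has the parity of the length.\<close>

lemma even_card_changes_iff:
  fixes f :: "nat \<Rightarrow> bool"
  shows "even (card {i. i < n \<and> f i \<noteq> f (Suc i)}) \<longleftrightarrow> f 0 = f n"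
proof (induction n)
  case 0
  show ?case by simp
next
  case (Suc n)
  have "{i. i < Suc n \<and> f i \<noteq> f (Suc i)} =
        (if f n \<noteq> f (Suc n) then insert n else id) {i. i < n \<and> f i \<noteq> f (Suc i)}"
    by (auto simp: less_Suc_eq)
  then show ?case
    using Suc.IH by auto
qed

lemma even_card_cyclic_changes:
  fixes f :: "nat \<Rightarrow> bool"
  assumes "0 < n"
  shows "even (card {i. i < n \<and> f i \<noteq> f (Suc i mod n)})"
proof -
  have "{i. i < n \<and> f i \<noteq> f (Suc i mod n)} = {i. i < n \<and> f (i mod n) \<noteq> f (Suc i mod n)}"
    by auto
  also have "even (card \<dots>)"
    using even_card_changes_iff[of n "\<lambda>i. f (i mod n)"] by simp
  finally show ?thesis .
qed

lemma card_filter_add_card_filter_not: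
  "card {i. i < n \<and> P i} + card {i. i < n \<and> \<not> P i} = n"
proof -
  have "{i. i < n \<and> \<not> P i} = {..<n} - {i. i < n \<and> P i}"
    by auto
  moreover have "card {i. i < n \<and> P i} \<le> n"
    using card_mono[of "{..<n}" "{i. i < n \<and> P i}"] by auto
  ultimately show ?thesis
    by (simp add: card_Diff_subset subset_eq)
qed

lemma cycle_neighbours_distinct:
  assumes "is_cycle V E vs" and "i < length vs"
  shows "vs ! i \<noteq> cyc_next vs (Suc i mod length vs)"
proof -
  let ?n = "length vs"
  have "?n \<ge> 3" and "distinct vs"
    using assms(1) by (auto simp: is_cycle_def)
  have "Suc (Suc i) mod ?n \<noteq> i"
    using \<open>?n \<ge> 3\<close> \<open>i < ?n\<close> by (cases "Suc (Suc i) < ?n") (auto simp: mod_if)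
  moreover have "Suc (Suc i) mod ?n < ?n"
    using \<open>i < ?n\<close> by (intro mod_less_divisor) auto
  ultimately have "vs ! i \<noteq> vs ! (Suc (Suc i) mod ?n)"
    using \<open>distinct vs\<close> \<open>i < ?n\<close> by (simp add: nth_eq_iff_index_eq)
  then show ?thesis
    unfolding cyc_next_def mod_Suc_eq .
qed

lemma ab_cycle_links_at_vertex_differ:
  assumes "consistent_coloring E c" and "ab_cycle V E c \<alpha> \<beta> vs" and "i < length vs"
  shows "c (cyc_next vs i) (vs ! i) \<noteq> c (cyc_next vs i) (cyc_next vs (Suc i mod length vs))"
proof -
  let ?j = "Suc i mod length vs"
  have cycle: "is_cycle V E vs"
    using assms(2) by (simp add: ab_cycle_def)
  have "?j < length vs"
    using assms(3) by (intro mod_less_divisor) auto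
  then have "{cyc_next vs i, vs ! i} \<in> E" and "{cyc_next vs i, cyc_next vs ?j} \<in> E"
    using cycle assms(3) by (auto simp: is_cycle_def cyc_next_def insert_commute)
  then show ?thesis
    using assms(1) cycle_neighbours_distinct[OF cycle assms(3)]
    unfolding consistent_coloring_def by blast
qed

lemma ab_cycle_variable_edge_iff:
  assumes "consistent_coloring E c" and "\<alpha> \<noteq> \<beta>" and "ab_cycle V E c \<alpha> \<beta> vs"
    and "i < length vs"
  shows "c (vs ! i) (cyc_next vs i) \<noteq> c (cyc_next vs i) (vs ! i) \<longleftrightarrow>
         (c (vs ! i) (cyc_next vs i) = \<alpha> \<longleftrightarrow>
          c (cyc_next vs i) (cyc_next vs (Suc i mod length vs)) = \<alpha>)"
proof -
  let ?j = "Suc i mod length vs"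
  have colours: "c (vs ! k) (cyc_next vs k) \<in> {\<alpha>, \<beta>}" "c (cyc_next vs k) (vs ! k) \<in> {\<alpha>, \<beta>}"
    if "k < length vs" for k
    using assms(3) that by (simp_all add: ab_cycle_def)
  have "?j < length vs"
    using assms(4) by (intro mod_less_divisor) auto
  moreover have "cyc_next vs i = vs ! ?j"
    by (simp add: cyc_next_def)
  ultimately have "c (cyc_next vs i) (cyc_next vs ?j) \<in> {\<alpha>, \<beta>}"
    using colours(1) by simp
  moreover have "x \<noteq> y \<longleftrightarrow> (x = \<alpha> \<longleftrightarrow> z = \<alpha>)"
    if "x \<in> {\<alpha>, \<beta>}" "y \<in> {\<alpha>, \<beta>}" "z \<in> {\<alpha>, \<beta>}" "y \<noteq> z" for x y z
    using that assms(2) by auto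
  ultimately show ?thesis
    using colours[OF assms(4)] ab_cycle_links_at_vertex_differ[OF assms(1,3,4)] by blast
qed

theorem lemma1:
  fixes V :: "'v set" and E :: "'v set set" and c :: "'v \<Rightarrow> 'v \<Rightarrow> 'c"
    and \<alpha> \<beta> :: 'c and H :: "'v list"
  assumes "simple_graph V E"
    and "consistent_coloring E c"
    and "\<alpha> \<noteq> \<beta>"
    and "ab_cycle V E c \<alpha> \<beta> H"
  shows "(even (length H) \<longrightarrow> even (num_variable_edges c H)) \<and>
         (odd (length H) \<longrightarrow> odd (num_variable_edges c H))"
proof -
  let ?n = "length H"
  define leaves_\<alpha> where "leaves_\<alpha> i \<longleftrightarrow> c (H ! i) (cyc_next H i) = \<alpha>" for i
  define change where "change i \<longleftrightarrow> leaves_\<alpha> i \<noteq> leaves_\<alpha> (Suc i mod ?n)" for i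
  have "c (H ! i) (cyc_next H i) \<noteq> c (cyc_next H i) (H ! i) \<longleftrightarrow> \<not> change i"
    if "i < ?n" for i
    using ab_cycle_variable_edge_iff[OF assms(2-4) that]
    by (simp add: change_def leaves_\<alpha>_def cyc_next_def)
  then have "num_variable_edges c H = card {i. i < ?n \<and> \<not> change i}"
    unfolding num_variable_edges_def by (intro arg_cong[where f = card] Collect_cong) blast
  moreover have "even (card {i. i < ?n \<and> change i})"
    unfolding change_def using assms(4)
    by (intro even_card_cyclic_changes) (auto simp: ab_cycle_def is_cycle_def)
  moreover have "even (card {i. i < ?n \<and> change i} + card {i. i < ?n \<and> \<not> change i}) = even ?n"
    by (simp only: card_filter_add_card_filter_not)
  ultimately show ?thesis
    by simp
qed

end
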